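(* The isoperimetric constant of Thompson's group $F$ with respect to the generating set $\{x_0,x_1\}$ satisfies $\iota(F,\{x_0,x_1\})\le 1/2$.
   Context: Thompson's group $F=\langle x_0,x_1,x_2,\dots\mid x_nx_k=x_kx_{n+1}\text{ for }k<n\rangle$, generated by $x_0,x_1$. For a group $G$ with finite generating set $\Sigma$ and Cayley graph $\Gamma$ (vertices $G$, an edge between $g$ and $sg$ for each $g\in G$, $s\in\Sigma$), and $S\subset G$, let $\delta S$ be the set of edges of $\Gamma$ joining a vertex of $S$ to a vertex of $G\setminus S$. The isoperimetric constant is $\iota(G,\Sigma)=\inf\{|\delta S|/|S| : S\subset G,\ 0<|S|<\infty\}$. *)

theory Defs
  imports "HOL-Algebra.Algebra" "HOL-Library.FuncSet"
begin

text \<open>Cayley graph of a group G w.r.t. a finite generating set Gens: vertices are the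
  elements of G, and for each g in G and s in Gens there is one edge joining g and s g.
  Edges are therefore indexed by pairs (g, s).\<close>

definition edge_boundary :: "('a, 'b) monoid_scheme \<Rightarrow> 'a set \<Rightarrow> 'a set \<Rightarrow> ('a \<times> 'a) set" where
  "edge_boundary G Gens S =
     {(g, s). g \<in> carrier G \<and> s \<in> Gens \<and> ((g \<in> S) \<noteq> (s \<otimes>\<^bsub>G\<^esub> g \<in> S))}"

definition isoperimetric_constant :: "('a, 'b) monoid_scheme \<Rightarrow> 'a set \<Rightarrow> real" where
  "isoperimetric_constant G Gens =
     Inf {real (card (edge_boundary G Gens S)) / real (card S) | S.
            S \<subseteq> carrier G \<and> finite S \<and> S \<noteq> {}}"

text \<open>Standard piecewise-linear model (Cannon--Floyd--Parry): F is the group of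
  homeomorphisms of [0,1] generated by the two maps below (under composition),
  which is isomorphic to the group given by the infinite presentation, with
  generators corresponding to generators.\<close>

definition x0 :: "real \<Rightarrow> real" where
  "x0 = (\<lambda>t \<in> {0..1}.
           if t \<le> 1/2 then t / 2
           else if t \<le> 3/4 then t - 1/4
           else 2 * t - 1)"

definition x1 :: "real \<Rightarrow> real" where
  "x1 = (\<lambda>t \<in> {0..1}.
           if t \<le> 1/2 then t
           else if t \<le> 3/4 then t / 2 + 1/4
           else if t \<le> 7/8 then t - 1/8
           else 2 * t - 1)"

definition Thompson_F :: "(real \<Rightarrow> real) monoid" where
  "Thompson_F = (BijGroup {0..1}) \<lparr> carrier := generate (BijGroup {0..1}) {x0, x1} \<rparr>"

end

(*
  Write elements of F in normal form x0^h x1^a1 x2^a2 ... and read the exponents a1 a2 ...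
  as the concatenated Lukasiewicz words of a forest of plane trees, with h a pointer to one of
  the trees. Let S consist of the elements whose forest has N nodes, all trees having at most
  K nodes, and whose pointer lies before the last tree. Left multiplication by x0 moves the
  pointer, so S - x0 S contains only elements with h = 0; left multiplication by x1 grafts tree
  h + 1 onto the root of tree h, so S - x1 S contains only elements whose tree h is a single
  node. With A(N) the number of forests and G(N) the number of forests with a marked tree,
  this gives |S| = G(N) - A(N) and a boundary of at most 2 A(N) + 2 G(N - 1).
  Now A(N) <= (K / N) G(N), and since there are about 4^K trees with K nodes, G grows at least
  like nu^N for any nu < 4 once K is large; hence G(N - 1) <= (1/4 + eps) G(N) for some large
  N, and the boundary-to-volume ratio is at most 1/2 + O(eps).
*)

theory Submission
  imports Defs
begin

section \<open>Boundaries in Cayley graphs\<close>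

lemma card_image_diff_eq:
  assumes "finite S" "inj_on f S"
  shows "card (f ` S - S) = card (S - f ` S)"
proof -
  have "card (f ` S - S) = card (f ` S) - card (f ` S \<inter> S)"
    using assms by (simp add: card_Diff_subset_Int)
  also have "\<dots> = card S - card (S \<inter> f ` S)"
    using assms by (simp add: card_image Int_commute)
  also have "\<dots> = card (S - f ` S)"
    using assms by (simp add: card_Diff_subset_Int)
  finally show ?thesis .
qed

context group
begin

lemma card_gen_boundary_le:
  assumes S: "finite S" "S \<subseteq> carrier G" and s: "s \<in> carrier G"
  shows "card {g \<in> carrier G. (g \<in> S) \<noteq> (s \<otimes> g \<in> S)} \<le> 2 * card (S - (\<lambda>g. s \<otimes> g) ` S)"
proof -
  let ?f = "\<lambda>g. s \<otimes> g"
  let ?out = "{g \<in> S. ?f g \<notin> S}" and ?in = "{g \<in> carrier G - S. ?f g \<in> S}"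
  have inj: "inj_on ?f (carrier G)" by (rule inj_onI) (use s in auto)
  have B: "{g \<in> carrier G. (g \<in> S) \<noteq> (?f g \<in> S)} = ?out \<union> ?in" using S by auto
  \<comment> \<open>left translation by s maps the outgoing part into sS - S and the incoming part into S - sS\<close>
  have out: "?f ` ?out \<subseteq> ?f ` S - S" by auto
  have in_img: "?f ` ?in \<subseteq> S - ?f ` S"
  proof
    fix y assume "y \<in> ?f ` ?in"
    then obtain g where g: "g \<in> carrier G" "g \<notin> S" "y = s \<otimes> g" "y \<in> S" by auto
    have "y \<notin> ?f ` S"
    proof
      assume "y \<in> ?f ` S"
      then obtain g' where "g' \<in> S" "y = s \<otimes> g'" by auto
      then show False using g S(2) s by auto
    qed
    then show "y \<in> S - ?f ` S" using g by simp
  qed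
  have "card ?in \<le> card (S - ?f ` S)"
    using card_inj_on_le[OF inj_on_subset[OF inj] in_img] S(1) by auto
  moreover have "card ?out \<le> card (?f ` S - S)"
    using S by (intro card_inj_on_le[OF _ out] inj_on_subset[OF inj]) auto
  moreover have "card (?f ` S - S) = card (S - ?f ` S)"
    using S by (intro card_image_diff_eq inj_on_subset[OF inj])
  ultimately show ?thesis
    unfolding B using card_Un_le[of ?out ?in] by linarith
qed

lemma card_edge_boundary_le:
  assumes S: "finite S" "S \<subseteq> carrier G" and Gens: "finite Gens" "Gens \<subseteq> carrier G"
  shows "card (edge_boundary G Gens S) \<le> (\<Sum>s\<in>Gens. 2 * card (S - (\<lambda>g. s \<otimes> g) ` S))"
proof -
  let ?B = "\<lambda>s. {g \<in> carrier G. (g \<in> S) \<noteq> (s \<otimes> g \<in> S)}"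
  have "edge_boundary G Gens S = (\<Union>s\<in>Gens. ?B s \<times> {s})"
    unfolding edge_boundary_def by auto
  also have "card \<dots> \<le> (\<Sum>s\<in>Gens. card (?B s \<times> {s}))"
    by (rule card_UN_le[OF Gens(1)])
  also have "\<dots> \<le> (\<Sum>s\<in>Gens. 2 * card (S - (\<lambda>g. s \<otimes> g) ` S))"
    using card_gen_boundary_le[OF S] Gens(2)
    by (intro sum_mono) (auto simp: card_cartesian_product)
  finally show ?thesis .
qed

end

lemma isoperimetric_constant_le:
  assumes "\<And>\<delta>. \<delta> > 0 \<Longrightarrow> \<exists>S. S \<subseteq> carrier G \<and> finite S \<and> S \<noteq> {} \<and>
             real (card (edge_boundary G Gens S)) \<le> (c + \<delta>) * real (card S)"
  shows "isoperimetric_constant G Gens \<le> c"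
proof (rule field_le_epsilon)
  let ?R = "{real (card (edge_boundary G Gens S)) / real (card S) | S.
               S \<subseteq> carrier G \<and> finite S \<and> S \<noteq> {}}"
  have bdd: "bdd_below ?R" by (rule bdd_belowI[of _ 0]) auto
  fix \<delta> :: real assume "\<delta> > 0"
  then obtain S where S: "S \<subseteq> carrier G" "finite S" "S \<noteq> {}"
    and le: "real (card (edge_boundary G Gens S)) \<le> (c + \<delta>) * real (card S)"
    using assms by blast
  have "real (card (edge_boundary G Gens S)) / real (card S) \<in> ?R" using S by blast
  then have "Inf ?R \<le> real (card (edge_boundary G Gens S)) / real (card S)"
    using bdd by (rule cInf_lower)
  also have "\<dots> \<le> c + \<delta>"
    using le S by (simp add: divide_le_eq card_gt_0_iff)
  finally show "isoperimetric_constant G Gens \<le> c + \<delta>"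
    unfolding isoperimetric_constant_def .
qed

section \<open>The piecewise-linear model of F\<close>

abbreviation Bij01 :: "(real \<Rightarrow> real) monoid" where
  "Bij01 \<equiv> BijGroup {0..1}"

abbreviation mult01 :: "(real \<Rightarrow> real) \<Rightarrow> (real \<Rightarrow> real) \<Rightarrow> real \<Rightarrow> real" (infixl \<open>\<bullet>\<close> 70)
  where "f \<bullet> g \<equiv> f \<otimes>\<^bsub>Bij01\<^esub> g"

interpretation Bij01: group Bij01
  by (rule group_BijGroup)

lemma carrier_Bij01: "carrier Bij01 = Bij {0..1}"
  by (simp add: BijGroup_def)

lemma mult_Bij01: "f \<in> carrier Bij01 \<Longrightarrow> g \<in> carrier Bij01 \<Longrightarrow> f \<bullet> g = compose {0..1} f g"
  by (simp add: BijGroup_def)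

lemma apply_mult_Bij01:
  "f \<in> carrier Bij01 \<Longrightarrow> g \<in> carrier Bij01 \<Longrightarrow> t \<in> {0..1} \<Longrightarrow> (f \<bullet> g) t = f (g t)"
  by (simp add: mult_Bij01 compose_def)

lemma apply_one_Bij01: "t \<in> {0..1} \<Longrightarrow> \<one>\<^bsub>Bij01\<^esub> t = t"
  by (simp add: BijGroup_def)

lemma Bij01_mapsto: "f \<in> carrier Bij01 \<Longrightarrow> t \<in> {0..1} \<Longrightarrow> f t \<in> {0..1}"
  using Bij_imp_funcset by (fastforce simp: carrier_Bij01)

lemma Bij01_eqI:
  assumes "f \<in> carrier Bij01" "g \<in> carrier Bij01" "\<And>t. t \<in> {0..1} \<Longrightarrow> f t = g t"
  shows "f = g"
  using assms by (intro extensionalityI[where A="{0..1}"]) (auto simp: carrier_Bij01 Bij_imp_extensional)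

lemma Bij01_byWitness:
  assumes "f \<in> extensional {0..1}" "f ` {0..1} \<subseteq> {0..1}" "g ` {0..1} \<subseteq> {0..1}"
    "\<And>t. t \<in> {0..1} \<Longrightarrow> g (f t) = t" "\<And>t. t \<in> {0..1} \<Longrightarrow> f (g t) = t"
  shows "f \<in> carrier Bij01"
  unfolding carrier_Bij01 Bij_def using assms by (auto intro!: bij_betw_byWitness[of _ g])

lemma x0_in_carrier: "x0 \<in> carrier Bij01"
proof (rule Bij01_byWitness)
  let ?y = "\<lambda>t::real. if t \<le> 1/4 then 2 * t else if t \<le> 1/2 then t + 1/4 else (t + 1) / 2"
  show "x0 \<in> extensional {0..1}" by (simp add: x0_def)
  show "x0 ` {0..1} \<subseteq> {0..1}" "?y ` {0..1} \<subseteq> {0..1}" by (auto simp: x0_def)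
  show "?y (x0 t) = t" "x0 (?y t) = t" if "t \<in> {0..1}" for t
    using that by (auto simp: x0_def field_simps)
qed

lemma x0_apply_upper: "3/4 \<le> t \<Longrightarrow> t \<le> 1 \<Longrightarrow> x0 t = 2 * t - 1"
  by (cases "t = 3/4") (simp_all add: x0_def)

text \<open>The shift realises the endomorphism \<open>x\<^sub>n \<mapsto> x\<^sub>n\<^sub>+\<^sub>1\<close> of F, so \<open>xgen n\<close> below is \<open>x\<^sub>n\<close>.\<close>

definition shift :: "(real \<Rightarrow> real) \<Rightarrow> real \<Rightarrow> real" where
  "shift g = (\<lambda>t\<in>{0..1}. if t < 1/2 then t else (1 + g (2 * t - 1)) / 2)"

lemma shift_apply_lower: "0 \<le> t \<Longrightarrow> t < 1/2 \<Longrightarrow> shift g t = t"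
  by (simp add: shift_def)

lemma shift_apply_upper: "1/2 \<le> t \<Longrightarrow> t \<le> 1 \<Longrightarrow> shift g t = (1 + g (2 * t - 1)) / 2"
  by (simp add: shift_def)

lemma shift_apply_rescaled: "u \<in> {0..1} \<Longrightarrow> shift g ((1 + u) / 2) = (1 + g u) / 2"
  by (simp add: shift_def) (simp add: field_simps)

lemma unit_interval_cases:
  assumes "t \<in> {0..1::real}"
  obtains "0 \<le> t" "t < 1/2" | u where "u \<in> {0..1}" "t = (1 + u) / 2"
  using assms by (cases "t < 1/2") (auto intro: that(2)[of "2 * t - 1"])

lemma shift_in_carrier:
  assumes g: "g \<in> carrier Bij01"
  shows "shift g \<in> carrier Bij01"
proof -
  let ?h = "inv_into {0..1} g"
  have bij: "bij_betw g {0..1} {0..1}" using g by (simp add: carrier_Bij01 Bij_def)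
  have h: "?h u \<in> {0..1}" "g (?h u) = u" "?h (g u) = u" if "u \<in> {0..1}" for u
    using bij_betw_inv_into_right[OF bij that] bij_betw_inv_into_left[OF bij that]
      bij_betwE[OF bij_betw_inv_into[OF bij]] that by auto
  have inv: "shift g t \<in> {0..1} \<and> shift ?h t \<in> {0..1} \<and> shift ?h (shift g t) = t \<and> shift g (shift ?h t) = t"
    if "t \<in> {0..1}" for t
    using that
  proof (cases rule: unit_interval_cases)
    case 1 then show ?thesis by (simp add: shift_apply_lower)
  next
    case (2 u)
    then show ?thesis using h[of u] Bij01_mapsto[OF g, of u] unfolding 2(2) by (simp add: shift_apply_rescaled)
  qed
  show ?thesis
  proof (rule Bij01_byWitness[where g="shift ?h"])
    show "shift g \<in> extensional {0..1}" by (simp add: shift_def)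
  qed (use inv in auto)
qed

lemma shift_mult:
  assumes "f \<in> carrier Bij01" "g \<in> carrier Bij01"
  shows "shift (f \<bullet> g) = shift f \<bullet> shift g"
proof (rule Bij01_eqI)
  show "shift (f \<bullet> g) \<in> carrier Bij01" "shift f \<bullet> shift g \<in> carrier Bij01"
    using assms by (simp_all add: shift_in_carrier)
  fix t :: real assume "t \<in> {0..1}"
  then show "shift (f \<bullet> g) t = (shift f \<bullet> shift g) t"
  proof (cases rule: unit_interval_cases)
    case 1 then show ?thesis using assms by (simp add: shift_apply_lower apply_mult_Bij01 shift_in_carrier)
  next
    case (2 u)
    then show ?thesis using assms Bij01_mapsto[of g u] unfolding 2(2)
      by (simp add: shift_apply_rescaled apply_mult_Bij01 shift_in_carrier)
  qed
qed

lemma shift_hom: "shift \<in> hom Bij01 Bij01"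
  by (auto simp: hom_def shift_in_carrier shift_mult)

interpretation shift: group_hom Bij01 Bij01 shift
  by (simp add: group_hom_def group_hom_axioms_def Bij01.group_axioms shift_hom)

lemma shift_inj: "inj_on shift (carrier Bij01)"
proof (rule inj_onI)
  fix f g assume fg: "f \<in> carrier Bij01" "g \<in> carrier Bij01" "shift f = shift g"
  show "f = g"
  proof (rule Bij01_eqI[OF fg(1,2)])
    fix u :: real assume "u \<in> {0..1}"
    then show "f u = g u" using shift_apply_rescaled[of u f] shift_apply_rescaled[of u g] fg(3) by simp
  qed
qed

lemma shift_fixes_zero: "shift g 0 = 0"
  by (simp add: shift_def)

lemma x1_eq_shift_x0: "x1 = shift x0"
proof (rule extensionalityI[where A="{0..1}"])
  show "x1 \<in> extensional {0..1}" "shift x0 \<in> extensional {0..1}"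
    by (simp_all add: x1_def shift_def)
  fix t :: real assume t: "t \<in> {0..1}"
  consider "t < 1/2" | "1/2 \<le> t" "t \<le> 3/4" | "3/4 < t" "t \<le> 7/8" | "7/8 < t" by linarith
  then show "x1 t = shift x0 t"
    by cases (use t in \<open>auto simp: x1_def x0_def shift_def field_simps\<close>)
qed

lemma shift_shift_x0_commute:
  assumes g: "g \<in> carrier Bij01" and g0: "g 0 = 0"
  shows "shift g \<bullet> x0 = x0 \<bullet> shift (shift g)"
proof (rule Bij01_eqI)
  show "shift g \<bullet> x0 \<in> carrier Bij01" "x0 \<bullet> shift (shift g) \<in> carrier Bij01"
    using g x0_in_carrier by (simp_all add: shift_in_carrier)
  fix t :: real assume t: "t \<in> {0..1}"
  consider "t < 3/4" | "t = 3/4" | "3/4 < t" by linarith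
  then have "shift g (x0 t) = x0 (shift (shift g) t)"
  proof cases
    case 1
    have "0 \<le> x0 t" "x0 t < 1/2" using t 1 by (auto simp: x0_def)
    moreover have "shift (shift g) t = t"
      using t 1 by (cases "t < 1/2") (simp_all add: shift_def)
    ultimately show ?thesis by (simp add: shift_apply_lower)
  next
    case 2
    then show ?thesis using g0 unfolding 2 by (simp add: shift_def x0_def)
  next
    case 3
    have u: "4 * t - 3 \<in> {0..1}" using t 3 by auto
    have gu: "g (4 * t - 3) \<in> {0..1}" using Bij01_mapsto[OF g u] .
    have x0t: "x0 t = 2 * t - 1" using t 3 by (simp add: x0_def)
    have sg: "shift g (2 * t - 1) = (1 + g (4 * t - 3)) / 2"
      using shift_apply_upper[of "2 * t - 1" g] t 3 by (simp add: algebra_simps)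
    have "shift (shift g) t = (1 + shift g (2 * t - 1)) / 2"
      using shift_apply_upper[of t "shift g"] t 3 by simp
    also have "\<dots> = (3 + g (4 * t - 3)) / 4" unfolding sg by simp
    finally have ss: "shift (shift g) t = (3 + g (4 * t - 3)) / 4" .
    have "x0 ((3 + g (4 * t - 3)) / 4) = 2 * ((3 + g (4 * t - 3)) / 4) - 1"
      using gu x0_apply_upper[of "(3 + g (4 * t - 3)) / 4"] by simp
    then have "x0 ((3 + g (4 * t - 3)) / 4) = (1 + g (4 * t - 3)) / 2" by simp
    then show ?thesis by (simp only: x0t sg ss)
  qed
  then show "(shift g \<bullet> x0) t = (x0 \<bullet> shift (shift g)) t"
    using t g x0_in_carrier
    by (simp only: apply_mult_Bij01 shift_in_carrier)
qed

lemma shift_funpow_hom: "shift ^^ k \<in> hom Bij01 Bij01"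
proof (induction k)
  case 0 then show ?case by (auto simp: hom_def)
next
  case (Suc k) then show ?case using hom_compose[OF _ shift_hom] by (simp only: funpow.simps)
qed

definition xgen :: "nat \<Rightarrow> real \<Rightarrow> real" where
  "xgen n = (shift ^^ n) x0"

lemma xgen_0: "xgen 0 = x0"
  by (simp add: xgen_def)

lemma xgen_1: "xgen (Suc 0) = x1"
  by (simp add: xgen_def x1_eq_shift_x0)

lemma xgen_Suc: "xgen (Suc n) = shift (xgen n)"
  by (simp add: xgen_def)

lemma xgen_in_carrier [simp]: "xgen n \<in> carrier Bij01"
  by (induction n) (simp_all add: xgen_0 xgen_Suc x0_in_carrier shift_in_carrier)

lemma xgen_fixes_zero: "xgen n 0 = 0"
  by (cases n) (simp_all add: xgen_0 xgen_Suc x0_def shift_fixes_zero)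

lemma shift_funpow_xgen: "(shift ^^ k) (xgen n) = xgen (n + k)"
  unfolding xgen_def add.commute[of n k] funpow_add by simp

lemma xgen_commute: "k < m \<Longrightarrow> xgen m \<bullet> xgen k = xgen k \<bullet> xgen (Suc m)"
proof -
  assume "k < m"
  then obtain d where m: "m = k + Suc d" by (metis add_Suc_right less_iff_Suc_add)
  have "xgen (Suc d) \<bullet> xgen 0 = xgen 0 \<bullet> xgen (Suc (Suc d))"
    unfolding xgen_0 xgen_Suc by (rule shift_shift_x0_commute[OF xgen_in_carrier xgen_fixes_zero])
  then have "(shift ^^ k) (xgen (Suc d) \<bullet> xgen 0) = (shift ^^ k) (xgen 0 \<bullet> xgen (Suc (Suc d)))"
    by simp
  then show ?thesis
    unfolding m using hom_mult[OF shift_funpow_hom] by (simp add: shift_funpow_xgen add.commute)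
qed

lemma x1_in_carrier: "x1 \<in> carrier Bij01"
  using xgen_in_carrier[of "Suc 0"] by (simp only: xgen_1)

lemma carrier_Thompson_F: "carrier Thompson_F = generate Bij01 {x0, x1}"
  by (simp add: Thompson_F_def)

lemma mult_Thompson_F: "f \<otimes>\<^bsub>Thompson_F\<^esub> g = f \<bullet> g"
  by (simp add: Thompson_F_def)

lemma subgroup_Thompson_F: "subgroup (carrier Thompson_F) Bij01"
  unfolding carrier_Thompson_F
  by (rule Bij01.generate_is_subgroup) (simp add: x0_in_carrier x1_in_carrier)

lemma group_Thompson_F: "group Thompson_F"
  unfolding Thompson_F_def
  by (rule subgroup.subgroup_is_group[OF _ Bij01.group_axioms])
    (rule subgroup_Thompson_F[unfolded carrier_Thompson_F])

lemma pow_in_Thompson_F: "f \<in> carrier Thompson_F \<Longrightarrow> f [^]\<^bsub>Bij01\<^esub> (n::nat) \<in> carrier Thompson_F"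
  by (induction n) (simp_all add: subgroup.one_closed[OF subgroup_Thompson_F]
      subgroup.m_closed[OF subgroup_Thompson_F])

lemma xgen_in_Thompson_F: "xgen n \<in> carrier Thompson_F"
proof (induction n rule: nat_less_induct)
  case (1 n)
  have x01: "x0 \<in> carrier Thompson_F" "x1 \<in> carrier Thompson_F"
    unfolding carrier_Thompson_F by (auto intro: generate.incl)
  consider "n = 0" | "n = 1" | m where "n = Suc (Suc m)"
    by (metis One_nat_def not0_implies_Suc)
  then show ?case
  proof cases
    case (3 m)
    have commute: "xgen (Suc m) \<bullet> x0 = x0 \<bullet> xgen n"
      using xgen_commute[of 0 "Suc m"] by (simp add: xgen_0 3)
    have "xgen n = inv\<^bsub>Bij01\<^esub> x0 \<bullet> (x0 \<bullet> xgen n)"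
      using x0_in_carrier by (simp add: Bij01.m_assoc[symmetric])
    also have "\<dots> = inv\<^bsub>Bij01\<^esub> x0 \<bullet> xgen (Suc m) \<bullet> x0"
      unfolding commute[symmetric]
      using x0_in_carrier by (simp add: Bij01.m_assoc)
    finally have "xgen n = inv\<^bsub>Bij01\<^esub> x0 \<bullet> xgen (Suc m) \<bullet> x0" .
    moreover have "xgen (Suc m) \<in> carrier Thompson_F" using 1 3 by simp
    ultimately show ?thesis
      using x01 subgroup_Thompson_F by (simp add: subgroup.m_closed subgroup.m_inv_closed)
  qed (use x01 xgen_0 xgen_1 in simp_all)
qed

fun nf :: "nat \<Rightarrow> nat list \<Rightarrow> real \<Rightarrow> real" where
  "nf k [] = \<one>\<^bsub>Bij01\<^esub>"
| "nf k (a # as) = xgen k [^]\<^bsub>Bij01\<^esub> a \<bullet> nf (Suc k) as"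

lemma nf_in_carrier [simp]: "nf k as \<in> carrier Bij01"
  by (induction as arbitrary: k) simp_all

lemma nf_in_Thompson_F: "nf k as \<in> carrier Thompson_F"
  by (induction as arbitrary: k)
    (simp_all add: subgroup.one_closed[OF subgroup_Thompson_F] subgroup.m_closed[OF subgroup_Thompson_F]
      pow_in_Thompson_F xgen_in_Thompson_F)

lemma shift_nf: "shift (nf k as) = nf (Suc k) as"
  by (induction as arbitrary: k) (simp_all add: shift.hom_nat_pow xgen_Suc)

lemma nf_Cons_0: "nf 0 (a # as) = x0 [^]\<^bsub>Bij01\<^esub> a \<bullet> shift (nf 0 as)"
  by (simp add: shift_nf xgen_0)

lemma x0_pow_apply: "t \<in> {0..1/2} \<Longrightarrow> (x0 [^]\<^bsub>Bij01\<^esub> (a::nat)) t = t / 2 ^ a"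
proof (induction a arbitrary: t)
  case 0 then show ?case by (simp add: apply_one_Bij01)
next
  case (Suc a)
  have "(x0 [^]\<^bsub>Bij01\<^esub> Suc a) t = (x0 [^]\<^bsub>Bij01\<^esub> a) (x0 t)"
    using Suc.prems x0_in_carrier by (simp add: apply_mult_Bij01)
  also have "x0 t = t / 2" using Suc.prems by (simp add: x0_def)
  finally show ?case using Suc.prems Suc.IH[of "t / 2"] by simp
qed

lemma nf_Cons_0_apply: "nf 0 (a # as) (1/4) = 1/4 / 2 ^ a"
proof -
  have "nf 0 (a # as) (1/4) = (x0 [^]\<^bsub>Bij01\<^esub> a) (shift (nf 0 as) (1/4))"
    unfolding nf_Cons_0 using x0_in_carrier by (simp add: apply_mult_Bij01 shift_in_carrier)
  also have "\<dots> = 1/4 / 2 ^ a" by (simp add: shift_apply_lower x0_pow_apply)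
  finally show ?thesis .
qed

lemma nf_0_inj: "length as = length bs \<Longrightarrow> nf 0 as = nf 0 bs \<Longrightarrow> as = bs"
proof (induction as arbitrary: bs)
  case (Cons a as)
  then obtain b bs' where bs: "bs = b # bs'" by (cases bs) auto
  have "(1/4::real) / 2 ^ a = 1/4 / 2 ^ b"
    using Cons.prems(2) nf_Cons_0_apply unfolding bs by metis
  then have ab: "a = b" by simp
  have "shift (nf 0 as) = shift (nf 0 bs')"
    using Cons.prems(2) x0_in_carrier unfolding bs ab nf_Cons_0
    by (simp add: shift_in_carrier)
  then have "nf 0 as = nf 0 bs'" using shift_inj by (auto dest: inj_onD)
  then show ?case using Cons ab bs by simp
qed simp

text \<open>\<open>push\<close> computes left multiplication by a generator on normal forms: the relations
  \<open>x\<^sub>m x\<^sub>k = x\<^sub>k x\<^sub>m\<^sub>+\<^sub>1\<close> move the new letter past \<open>x\<^sub>k\<^sup>a\<close>, raising its index by \<open>a\<close>.\<close>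

fun push :: "nat \<Rightarrow> nat list \<Rightarrow> nat list" where
  "push i [] = replicate i 0 @ [1]"
| "push 0 (a # as) = Suc a # as"
| "push (Suc i) (a # as) = a # push (i + a) as"

lemma nf_replicate_0_1: "nf k (replicate i 0 @ [1]) = xgen (k + i)"
  by (induction i arbitrary: k) (simp_all add: Bij01.nat_pow_Suc)

lemma xgen_pow_commute:
  "k < m \<Longrightarrow> xgen m \<bullet> xgen k [^]\<^bsub>Bij01\<^esub> a = xgen k [^]\<^bsub>Bij01\<^esub> a \<bullet> xgen (m + a)"
proof (induction a arbitrary: m)
  case (Suc a)
  have pow: "xgen k [^]\<^bsub>Bij01\<^esub> Suc a = xgen k \<bullet> xgen k [^]\<^bsub>Bij01\<^esub> a"
    by (rule Bij01.nat_pow_Suc2) simp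
  have "xgen m \<bullet> xgen k [^]\<^bsub>Bij01\<^esub> Suc a = xgen m \<bullet> xgen k \<bullet> xgen k [^]\<^bsub>Bij01\<^esub> a"
    unfolding pow by (simp add: Bij01.m_assoc)
  also have "\<dots> = xgen k \<bullet> (xgen (Suc m) \<bullet> xgen k [^]\<^bsub>Bij01\<^esub> a)"
    using Suc.prems by (simp add: xgen_commute Bij01.m_assoc)
  also have "\<dots> = xgen k [^]\<^bsub>Bij01\<^esub> Suc a \<bullet> xgen (m + Suc a)"
    using Suc unfolding pow by (simp add: Bij01.m_assoc)
  finally show ?case .
qed simp

lemma xgen_mult_nf: "xgen (k + i) \<bullet> nf k as = nf k (push i as)"
proof (induction as arbitrary: k i)
  case Nil then show ?case using nf_replicate_0_1[of k i] by simp
next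
  case (Cons a as)
  show ?case
  proof (cases i)
    case 0
    have "xgen k [^]\<^bsub>Bij01\<^esub> Suc a = xgen k \<bullet> xgen k [^]\<^bsub>Bij01\<^esub> a"
      by (rule Bij01.nat_pow_Suc2) simp
    with 0 show ?thesis by (simp add: Bij01.m_assoc)
  next
    case (Suc j)
    have "xgen (k + i) \<bullet> nf k (a # as) = xgen k [^]\<^bsub>Bij01\<^esub> a \<bullet> (xgen (Suc k + (j + a)) \<bullet> nf (Suc k) as)"
      using Suc by (simp add: xgen_pow_commute Bij01.m_assoc[symmetric] add.assoc)
    also have "\<dots> = nf k (push i (a # as))" using Suc Cons.IH[of "Suc k" "j + a"] by simp
    finally show ?thesis .
  qed
qed

section \<open>\L{}ukasiewicz words\<close>

text \<open>The \L{}ukasiewicz word of a plane tree lists the numbers of children of its nodes in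
  preorder; these are exactly the lists characterised below.\<close>

definition lukasiewicz :: "nat list \<Rightarrow> bool" where
  "lukasiewicz c \<longleftrightarrow> sum_list c + 1 = length c \<and> (\<forall>j < length c. j \<le> sum_list (take j c))"

lemma lukasiewicz_leaf: "lukasiewicz [0]"
  by (simp add: lukasiewicz_def)

lemma lukasiewicz_nonempty: "lukasiewicz c \<Longrightarrow> c \<noteq> []"
  by (auto simp: lukasiewicz_def)

lemma lukasiewicz_Cons_0: "lukasiewicz (0 # l) \<Longrightarrow> l = []"
  unfolding lukasiewicz_def by (cases l) (auto dest: spec[of _ 1])

lemma lukasiewicz_member_le: "lukasiewicz c \<Longrightarrow> x \<in> set c \<Longrightarrow> x \<le> length c"
  unfolding lukasiewicz_def using member_le_sum_list[of x c] by simp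

lemma sum_list_take_mono: "i \<le> j \<Longrightarrow> sum_list (take i xs) \<le> sum_list (take j (xs::nat list))"
  by (metis le_add_diff_inverse take_add sum_list_append le_add1)

lemma lukasiewicz_prefix_unique:
  assumes c: "lukasiewicz c" and d: "lukasiewicz d" and eq: "c @ r = d @ r'"
  shows "c = d \<and> r = r'"
proof -
  have not_shorter: "\<not> length c < length d"
    if "lukasiewicz c" "lukasiewicz d" "c @ r = d @ r'" for c d r r'
  proof
    assume less: "length c < length d"
    have "take (length c) d = c"
      using arg_cong[OF that(3), of "take (length c)"] less by simp
    moreover have "length c \<le> sum_list (take (length c) d)"
      using that(2) less unfolding lukasiewicz_def by blast
    ultimately show False using that(1) unfolding lukasiewicz_def by simp
  qed
  have "length c = length d"
    using not_shorter[OF c d eq] not_shorter[OF d c eq[symmetric]] by simp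
  then show ?thesis using eq by simp
qed

lemma concat_lukasiewicz_inj:
  "\<forall>c\<in>set cs. lukasiewicz c \<Longrightarrow> \<forall>d\<in>set ds. lukasiewicz d \<Longrightarrow> concat cs = concat ds \<Longrightarrow> cs = ds"
proof (induction cs arbitrary: ds)
  case Nil
  show ?case
  proof (cases ds)
    case (Cons d ds')
    then have "d \<noteq> []" using Nil.prems(2) lukasiewicz_nonempty by simp
    then show ?thesis using Nil.prems(3) Cons by simp
  qed simp
next
  case (Cons c cs)
  have "c \<noteq> []" using Cons.prems(1) lukasiewicz_nonempty by simp
  then obtain d ds' where ds: "ds = d # ds'"
    using Cons.prems(3) by (cases ds) auto
  have "c = d \<and> concat cs = concat ds'"
    using lukasiewicz_prefix_unique[of c d "concat cs" "concat ds'"] Cons.prems ds by simp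
  then show ?case using Cons.IH[of ds'] Cons.prems ds by simp
qed

lemma lukasiewicz_pair_split:
  assumes sum_d: "sum_list d + 2 = length d"
    and prefix_d: "\<And>j. j < length d \<Longrightarrow> j \<le> sum_list (take j d) + 1"
  obtains c1 c2 where "lukasiewicz c1" "lukasiewicz c2" "d = c1 @ c2"
proof -
  \<comment> \<open>the first tree ends at the first prefix whose sum falls below its length\<close>
  define P where "P j \<longleftrightarrow> sum_list (take j d) < j" for j
  define j1 where "j1 = (LEAST j. P j)"
  have "P (length d)" using sum_d by (simp add: P_def)
  then have P_j1: "P j1" and j1_le: "j1 \<le> length d"
    unfolding j1_def by (auto intro: LeastI Least_le)
  have below_j1: "j \<le> sum_list (take j d)" if "j < j1" for j
    using not_less_Least[OF that[unfolded j1_def]] by (simp add: P_def)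
  have j1_pos: "j1 \<ge> 1" using P_j1 by (cases j1) (auto simp: P_def)
  have sum_j1: "sum_list (take j1 d) = j1 - 1"
    using below_j1[of "j1 - 1"] sum_list_take_mono[of "j1 - 1" j1 d] P_j1 j1_pos
    by (simp add: P_def)
  have j1_less: "j1 < length d"
    using j1_le sum_j1 sum_d by (cases "j1 = length d") auto
  have sum_split: "sum_list d = sum_list (take j1 d) + sum_list (drop j1 d)"
    by (metis append_take_drop_id sum_list_append)
  have "lukasiewicz (take j1 d)"
    unfolding lukasiewicz_def using sum_j1 j1_pos j1_less below_j1 by (simp add: min_def)
  moreover have "lukasiewicz (drop j1 d)"
    unfolding lukasiewicz_def
  proof (intro conjI allI impI)
    show "sum_list (drop j1 d) + 1 = length (drop j1 d)"
      using sum_split sum_j1 sum_d j1_less j1_pos by simp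
    fix i assume "i < length (drop j1 d)"
    then have "j1 + i \<le> sum_list (take (j1 + i) d) + 1" by (intro prefix_d) simp
    then show "i \<le> sum_list (take i (drop j1 d))"
      using sum_j1 j1_pos by (simp add: take_add)
  qed
  ultimately show ?thesis using that by simp
qed

text \<open>A root with \<open>k + 1\<close> children is a root with \<open>k\<close> children with one more subtree grafted
  on as its last child.\<close>

lemma lukasiewicz_split:
  assumes "lukasiewicz (Suc k # l)"
  obtains c1 c2 where "lukasiewicz (k # c1)" "lukasiewicz c2" "l = c1 @ c2"
proof -
  have "sum_list (k # l) + 2 = length (k # l)"
    using assms by (simp add: lukasiewicz_def)
  moreover have "j \<le> sum_list (take j (k # l)) + 1" if "j < length (k # l)" for j
    using assms that unfolding lukasiewicz_def by (cases j) (auto dest: spec[of _ j])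
  ultimately obtain d1 c2 where d1: "lukasiewicz d1" and c2: "lukasiewicz c2" and "k # l = d1 @ c2"
    by (rule lukasiewicz_pair_split)
  moreover obtain c1 where "d1 = k # c1"
    using d1 \<open>k # l = d1 @ c2\<close> by (cases d1) (auto dest: lukasiewicz_nonempty)
  ultimately show ?thesis using that by simp
qed

lemma push_append:
  assumes "\<forall>j < length c. j < i + sum_list (take j c)"
  shows "push i (c @ rest) = c @ push (i + sum_list c - length c) rest"
  using assms
proof (induction c arbitrary: i)
  case (Cons a c)
  from Cons.prems obtain i' where i: "i = Suc i'" by (cases i) auto
  have "\<forall>j < length c. j < i' + a + sum_list (take j c)"
  proof (intro allI impI)
    fix j assume "j < length c"
    then show "j < i' + a + sum_list (take j c)"
      using Cons.prems[rule_format, of "Suc j"] i by simp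
  qed
  then show ?case using Cons.IH i by (simp add: add.assoc)
qed simp

text \<open>A tree has one node more than children, so pushing a generator past it lowers the index
  by one.\<close>

lemma push_lukasiewicz: "lukasiewicz c \<Longrightarrow> push (Suc i) (c @ rest) = c @ push i rest"
proof -
  assume "lukasiewicz c"
  then have "\<forall>j < length c. j < Suc i + sum_list (take j c)" "Suc i + sum_list c - length c = i"
    unfolding lukasiewicz_def by auto
  then show ?thesis using push_append[of c "Suc i" rest] by simp
qed

lemma push_concat_lukasiewicz:
  "\<forall>c\<in>set cs. lukasiewicz c \<Longrightarrow> push (length cs + i) (concat cs @ rest) = concat cs @ push i rest"
  by (induction cs) (simp_all add: push_lukasiewicz)

lemma cycle_lemma:
  assumes len: "length w = K" and sum: "sum_list w + 1 = K"
  shows "\<exists>r<K. lukasiewicz (rotate r w)"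
proof -
  define p where "p j = int (sum_list (take j w)) - int j" for j
  have K: "K \<ge> 1" using sum by simp
  have pK: "p K = -1" using len sum by (simp add: p_def)
  define m where "m = Min (p ` {..<K})"
  have m_le: "m \<le> p j" if "j < K" for j
    unfolding m_def using that by (intro Min_le) auto
  have "m \<in> p ` {..<K}" unfolding m_def using K by (intro Min_in) (auto simp: lessThan_empty_iff)
  then have "\<exists>j. j < K \<and> p j = m" by auto
  \<comment> \<open>rotate at the first position where the prefix sums attain their minimum\<close>
  define r where "r = (LEAST j. j < K \<and> p j = m)"
  have r: "r < K" "p r = m" using LeastI_ex[OF \<open>\<exists>j. j < K \<and> p j = m\<close>] by (simp_all add: r_def)
  have before_r: "p j > m" if "j < r" for j
    using not_less_Least[OF that[unfolded r_def]] m_le[of j] that r(1) by simp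
  have m_neg: "m \<le> -1" if "r > 0"
    using before_r[OF that] by (simp add: p_def)
  define v where "v = drop r w @ take r w"
  have v: "rotate r w = v" unfolding v_def using r len by (simp add: rotate_drop_take)
  have len_v: "length v = K" unfolding v_def using len r by simp
  have sum_w: "sum_list w = sum_list (take r w) + sum_list (drop r w)"
    by (metis append_take_drop_id sum_list_append)
  have "lukasiewicz v"
    unfolding lukasiewicz_def
  proof (intro conjI allI impI)
    show "sum_list v + 1 = length v" using sum sum_w len_v by (simp add: v_def)
    fix i assume i: "i < length v"
    show "i \<le> sum_list (take i v)"
    proof (cases "r + i \<le> K")
      case True
      have "int (sum_list (take i v)) - int i = p (r + i) - p r"
        using True len by (simp add: v_def p_def take_add)
      moreover have "p (r + i) \<ge> m \<or> (r + i = K \<and> r > 0)"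
        using True m_le i len_v by (cases "r + i < K") auto
      ultimately show ?thesis using r pK m_neg by auto
    next
      case False
      define i' where "i' = i - (K - r)"
      have i': "i' < r" using False i len_v unfolding i'_def by simp
      have "take i v = drop r w @ take i' w"
        using False len i' unfolding v_def i'_def by (simp add: min_def)
      then have "int (sum_list (take i v)) - int i = p K - p r + p i'"
        using sum_w len False i len_v r(1) unfolding p_def i'_def by (simp add: of_nat_diff)
      then show ?thesis using before_r[OF i'] pK r by simp
    qed
  qed
  then show ?thesis using v r by auto
qed

definition trees :: "nat \<Rightarrow> nat list set" where
  "trees K = {c. lukasiewicz c \<and> length c = K}"

lemma finite_lukasiewicz_length_le: "finite {c. lukasiewicz c \<and> length c \<le> K}"
proof (rule finite_subset)
  show "{c. lukasiewicz c \<and> length c \<le> K} \<subseteq> {c. set c \<subseteq> {0..K} \<and> length c \<le> K}"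
    using lukasiewicz_member_le by fastforce
qed (rule finite_lists_length_le, simp)

lemma finite_trees: "finite (trees K)"
  by (rule finite_subset[OF _ finite_lukasiewicz_length_le[of K]]) (auto simp: trees_def)

text \<open>Every list of length \<open>n + 1\<close> and sum \<open>n\<close> is a rotation of a tree, so the \<open>(2n choose n)\<close>
  such lists are covered by the \<open>n + 1\<close> rotations of the trees with \<open>n + 1\<close> nodes.\<close>

lemma central_binomial_le_card_trees: "(2 * n) choose n \<le> Suc n * card (trees (Suc n))"
proof -
  let ?K = "Suc n"
  let ?W = "{w::nat list. length w = ?K \<and> sum_list w = n}"
  have card_W: "card ?W = (2 * n) choose n"
    using card_length_sum_list[of ?K n] by (simp add: conj_commute mult_2)
  have "?W \<subseteq> (\<Union>i<?K. rotate i ` trees ?K)"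
  proof
    fix w assume w: "w \<in> ?W"
    then obtain r where r: "r < ?K" "lukasiewicz (rotate r w)"
      using cycle_lemma[of w ?K] by auto
    have "((?K - r) mod ?K + r) mod ?K = 0"
      using r by (simp add: mod_add_left_eq)
    then have "w = rotate ((?K - r) mod ?K) (rotate r w)"
      using w rotate_conv_mod[of "(?K - r) mod ?K + r" w] by (simp add: rotate_rotate)
    moreover have "rotate r w \<in> trees ?K" using r w by (simp add: trees_def)
    ultimately show "w \<in> (\<Union>i<?K. rotate i ` trees ?K)" by fastforce
  qed
  then have "card ?W \<le> card (\<Union>i<?K. rotate i ` trees ?K)"
    by (intro card_mono) (simp_all add: finite_trees)
  also have "\<dots> \<le> (\<Sum>i<?K. card (rotate i ` trees ?K))" by (rule card_UN_le) simp
  also have "\<dots> \<le> (\<Sum>i<?K. card (trees ?K))" by (intro sum_mono card_image_le finite_trees)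
  finally show ?thesis by (simp add: card_W[symmetric])
qed

lemma push_concat_graft:
  assumes "\<forall>c\<in>set pre. lukasiewicz c" "lukasiewicz (k # c1)"
  shows "push (length pre) (concat (pre @ (k # c1) # c2 # post)) = concat (pre @ (Suc k # c1 @ c2) # post)"
  using push_concat_lukasiewicz[OF assms(1), of 0 "(k # c1) @ c2 @ concat post"] by simp

section \<open>Forests\<close>

definition forests :: "nat \<Rightarrow> nat \<Rightarrow> nat list list set" where
  "forests K N = {cs. (\<forall>c\<in>set cs. lukasiewicz c \<and> length c \<le> K) \<and> sum_list (map length cs) = N}"

definition pointed_forests :: "nat \<Rightarrow> nat \<Rightarrow> (nat list list \<times> nat) set" where
  "pointed_forests K N = Sigma (forests K N) (\<lambda>cs. {..< length cs - 1})"

definition forest_count :: "nat \<Rightarrow> nat \<Rightarrow> nat" where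
  "forest_count K N = card (forests K N)"

definition marked_count :: "nat \<Rightarrow> nat \<Rightarrow> nat" where
  "marked_count K N = (\<Sum>cs\<in>forests K N. length cs)"

fun forest_word :: "nat list list \<times> nat \<Rightarrow> nat list" where
  "forest_word (cs, h) = h # concat cs"

definition forest_set :: "nat \<Rightarrow> nat \<Rightarrow> (real \<Rightarrow> real) set" where
  "forest_set K N = (\<lambda>p. nf 0 (forest_word p)) ` pointed_forests K N"

lemma length_le_sum_list_lengths: "\<forall>c\<in>set cs. c \<noteq> [] \<Longrightarrow> length cs \<le> sum_list (map length cs)"
proof (induction cs)
  case (Cons c cs)
  then have "length c \<ge> 1" by (simp add: Suc_le_eq)
  with Cons show ?case by simp
qed simp

lemma forests_length_le: "cs \<in> forests K N \<Longrightarrow> length cs \<le> N"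
  using length_le_sum_list_lengths[of cs] lukasiewicz_nonempty by (auto simp: forests_def)

lemma finite_forests: "finite (forests K N)"
proof (rule finite_subset)
  show "forests K N \<subseteq> {cs. set cs \<subseteq> {c. lukasiewicz c \<and> length c \<le> K} \<and> length cs \<le> N}"
    using forests_length_le by (auto simp: forests_def)
qed (intro finite_lists_length_le finite_lukasiewicz_length_le)

lemma finite_pointed_forests: "finite (pointed_forests K N)"
  by (simp add: pointed_forests_def finite_forests)

lemma card_pointed_forests: "card (pointed_forests K N) = (\<Sum>cs\<in>forests K N. length cs - 1)"
  by (simp add: pointed_forests_def card_SigmaI finite_forests)

lemma length_forest_word: "(cs, h) \<in> pointed_forests K N \<Longrightarrow> length (forest_word (cs, h)) = Suc N"
  by (simp add: pointed_forests_def forests_def length_concat)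

lemma nf_forest_word_inj: "inj_on (\<lambda>p. nf 0 (forest_word p)) (pointed_forests K N)"
proof (rule inj_onI)
  fix p q
  assume p: "p \<in> pointed_forests K N" and q: "q \<in> pointed_forests K N"
    and eq: "nf 0 (forest_word p) = nf 0 (forest_word q)"
  obtain cs h ds h' where pq: "p = (cs, h)" "q = (ds, h')" by (cases p, cases q)
  have "forest_word (cs, h) = forest_word (ds, h')"
    using nf_0_inj[OF _ eq] length_forest_word p q unfolding pq by simp
  moreover have "\<forall>c\<in>set cs. lukasiewicz c" "\<forall>d\<in>set ds. lukasiewicz d"
    using p q unfolding pq by (auto simp: pointed_forests_def forests_def)
  ultimately show "p = q" using concat_lukasiewicz_inj unfolding pq by auto
qed

lemma card_forest_set: "card (forest_set K N) = card (pointed_forests K N)"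
  unfolding forest_set_def by (rule card_image[OF nf_forest_word_inj])

lemma finite_forest_set: "finite (forest_set K N)"
  by (simp add: forest_set_def finite_pointed_forests)

lemma forest_set_subset_Thompson_F: "forest_set K N \<subseteq> carrier Thompson_F"
  unfolding forest_set_def using nf_in_Thompson_F by blast

lemma x0_mult_nf: "x0 \<bullet> nf 0 (a # w) = nf 0 (Suc a # w)"
proof -
  have "x0 [^]\<^bsub>Bij01\<^esub> Suc a = x0 \<bullet> x0 [^]\<^bsub>Bij01\<^esub> a"
    by (rule Bij01.nat_pow_Suc2) (simp add: x0_in_carrier)
  then show ?thesis by (simp add: xgen_0 Bij01.m_assoc x0_in_carrier)
qed

lemma x1_mult_nf: "x1 \<bullet> nf 0 (h # w) = nf 0 (h # push h w)"
  using xgen_mult_nf[of 0 1 "h # w"] by (simp add: xgen_1)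

lemma x1_mult_pointed_forest:
  assumes p: "(cs, h) \<in> pointed_forests K N" and not_leaf: "cs ! h \<noteq> [0]"
  shows "\<exists>q \<in> pointed_forests K N. x1 \<bullet> nf 0 (forest_word q) = nf 0 (forest_word (cs, h))"
proof -
  have cs: "cs \<in> forests K N" and h: "h < length cs - 1"
    using p by (auto simp: pointed_forests_def)
  have trees: "\<forall>c\<in>set cs. lukasiewicz c \<and> length c \<le> K" using cs by (simp add: forests_def)
  then have "lukasiewicz (cs ! h)" using h by simp
  then obtain a l where al: "cs ! h = a # l" by (cases "cs ! h") (auto dest: lukasiewicz_nonempty)
  with not_leaf \<open>lukasiewicz (cs ! h)\<close> obtain k where "a = Suc k"
    by (cases a) (auto dest: lukasiewicz_Cons_0)
  with \<open>lukasiewicz (cs ! h)\<close> al have "lukasiewicz (Suc k # l)" by simp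
  then obtain c1 c2 where c12: "lukasiewicz (k # c1)" "lukasiewicz c2" "l = c1 @ c2"
    by (rule lukasiewicz_split)
  define pre where "pre = take h cs"
  define post where "post = drop (Suc h) cs"
  define cs' where "cs' = pre @ (k # c1) # c2 # post"
  have "cs = pre @ cs ! h # post"
    unfolding pre_def post_def by (rule id_take_nth_drop) (use h in simp)
  then have cs_eq: "cs = pre @ (Suc k # c1 @ c2) # post"
    unfolding al c12(3) \<open>a = Suc k\<close> .
  have "cs' \<in> forests K N"
    using cs c12 unfolding cs_eq cs'_def forests_def by auto
  moreover have "h < length cs' - 1" using h by (simp add: cs'_def pre_def post_def)
  moreover have "x1 \<bullet> nf 0 (forest_word (cs', h)) = nf 0 (forest_word (cs, h))"
  proof -
    have pre: "length pre = h" "\<forall>c\<in>set pre. lukasiewicz c"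
      using h trees by (auto simp: pre_def dest: in_set_takeD)
    have "push h (concat cs') = concat (pre @ (Suc k # c1 @ c2) # post)"
      using push_concat_graft[OF pre(2) c12(1)] unfolding cs'_def pre(1) .
    then show ?thesis by (simp only: forest_word.simps x1_mult_nf cs_eq[symmetric])
  qed
  ultimately show ?thesis unfolding pointed_forests_def by blast
qed

lemma card_forest_set_diff_x0_le:
  "card (forest_set K N - (\<lambda>g. x0 \<bullet> g) ` forest_set K N) \<le> forest_count K N"
proof -
  let ?S = "forest_set K N"
  have "?S - (\<lambda>g. x0 \<bullet> g) ` ?S \<subseteq> (\<lambda>cs. nf 0 (forest_word (cs, 0))) ` forests K N"
  proof
    fix g assume g: "g \<in> ?S - (\<lambda>g. x0 \<bullet> g) ` ?S"
    then obtain cs h where p: "(cs, h) \<in> pointed_forests K N" and g_eq: "g = nf 0 (forest_word (cs, h))"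
      by (auto simp: forest_set_def)
    have "h = 0"
    proof (rule ccontr)
      assume "h \<noteq> 0"
      then obtain h' where h: "h = Suc h'" using not0_implies_Suc by blast
      then have "(cs, h') \<in> pointed_forests K N" using p by (auto simp: pointed_forests_def)
      then have "nf 0 (forest_word (cs, h')) \<in> ?S" unfolding forest_set_def by (rule imageI)
      moreover have "g = x0 \<bullet> nf 0 (forest_word (cs, h'))"
        unfolding g_eq h by (simp only: forest_word.simps x0_mult_nf)
      ultimately show False using g by blast
    qed
    then show "g \<in> (\<lambda>cs. nf 0 (forest_word (cs, 0))) ` forests K N"
      using p g_eq by (intro image_eqI[of _ _ cs]) (simp_all add: pointed_forests_def)
  qed
  then have "card (?S - (\<lambda>g. x0 \<bullet> g) ` ?S) \<le> card ((\<lambda>cs. nf 0 (forest_word (cs, 0))) ` forests K N)"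
    by (intro card_mono finite_imageI finite_forests)
  also have "\<dots> \<le> forest_count K N"
    unfolding forest_count_def by (rule card_image_le[OF finite_forests])
  finally show ?thesis .
qed

lemma card_pointed_at_leaf_le:
  "card {(cs, h) \<in> pointed_forests K N. cs ! h = [0]} \<le> marked_count K (N - 1)"
proof -
  let ?T = "Sigma (forests K (N - 1)) (\<lambda>cs. {..<length cs})"
  let ?insert_leaf = "\<lambda>(cs, h). (take h cs @ [0] # drop h cs, h)"
  have "{(cs, h) \<in> pointed_forests K N. cs ! h = [0]} \<subseteq> ?insert_leaf ` ?T"
  proof clarify
    fix cs h assume p: "(cs, h) \<in> pointed_forests K N" and leaf: "cs ! h = [0]"
    have cs: "cs \<in> forests K N" and h: "h < length cs - 1" using p by (auto simp: pointed_forests_def)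
    define cs0 where "cs0 = take h cs @ drop (Suc h) cs"
    have cs_eq: "cs = take h cs @ [0] # drop (Suc h) cs"
      using id_take_nth_drop[of h cs] h leaf by simp
    have "sum_list (map length cs) = sum_list (map length cs0) + 1"
      using arg_cong[OF cs_eq, of "\<lambda>cs. sum_list (map length cs)"] by (simp add: cs0_def)
    moreover have "set cs0 \<subseteq> set cs"
      using set_take_subset[of h cs] set_drop_subset[of "Suc h" cs] by (auto simp: cs0_def)
    ultimately have "cs0 \<in> forests K (N - 1)" using cs by (auto simp: forests_def)
    moreover have "h < length cs0" using h by (simp add: cs0_def)
    moreover have "?insert_leaf (cs0, h) = (cs, h)"
      using h cs_eq by (simp add: cs0_def)
    ultimately show "(cs, h) \<in> ?insert_leaf ` ?T" by force
  qed
  then have "card {(cs, h) \<in> pointed_forests K N. cs ! h = [0]} \<le> card (?insert_leaf ` ?T)"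
    by (intro card_mono finite_imageI) (simp add: finite_forests)
  also have "\<dots> \<le> card ?T" by (rule card_image_le) (simp add: finite_forests)
  also have "\<dots> = marked_count K (N - 1)" by (simp add: marked_count_def finite_forests)
  finally show ?thesis .
qed

lemma card_forest_set_diff_x1_le:
  "card (forest_set K N - (\<lambda>g. x1 \<bullet> g) ` forest_set K N) \<le> marked_count K (N - 1)"
proof -
  let ?S = "forest_set K N" and ?leaves = "{(cs, h) \<in> pointed_forests K N. cs ! h = [0]}"
  have fin_leaves: "finite ?leaves" by (rule finite_subset[OF _ finite_pointed_forests]) auto
  have "?S - (\<lambda>g. x1 \<bullet> g) ` ?S \<subseteq> (\<lambda>p. nf 0 (forest_word p)) ` ?leaves"
  proof
    fix g assume g: "g \<in> ?S - (\<lambda>g. x1 \<bullet> g) ` ?S"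
    then obtain cs h where p: "(cs, h) \<in> pointed_forests K N" and g_eq: "g = nf 0 (forest_word (cs, h))"
      by (auto simp: forest_set_def)
    have "cs ! h = [0]"
    proof (rule ccontr)
      assume "cs ! h \<noteq> [0]"
      from x1_mult_pointed_forest[OF p this] obtain q
        where q: "q \<in> pointed_forests K N" "x1 \<bullet> nf 0 (forest_word q) = g"
        using g_eq by blast
      have "nf 0 (forest_word q) \<in> ?S" using q(1) unfolding forest_set_def by (rule imageI)
      then show False using g q(2) by blast
    qed
    then show "g \<in> (\<lambda>p. nf 0 (forest_word p)) ` ?leaves"
      using p g_eq by (intro image_eqI[of _ _ "(cs, h)"]) simp_all
  qed
  then have "card (?S - (\<lambda>g. x1 \<bullet> g) ` ?S) \<le> card ((\<lambda>p. nf 0 (forest_word p)) ` ?leaves)"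
    by (intro card_mono finite_imageI fin_leaves)
  also have "\<dots> \<le> card ?leaves" by (rule card_image_le[OF fin_leaves])
  also have "\<dots> \<le> marked_count K (N - 1)" by (rule card_pointed_at_leaf_le)
  finally show ?thesis .
qed

lemma card_forest_set_add_forest_count:
  assumes "N \<ge> 1"
  shows "card (forest_set K N) + forest_count K N = marked_count K N"
proof -
  have "marked_count K N = (\<Sum>cs\<in>forests K N. (length cs - 1) + 1)"
    unfolding marked_count_def
  proof (rule sum.cong)
    fix cs assume "cs \<in> forests K N"
    then have "cs \<noteq> []" using assms by (auto simp: forests_def)
    then show "length cs = length cs - 1 + 1" by simp
  qed simp
  also have "\<dots> = card (pointed_forests K N) + forest_count K N"
    by (simp only: sum.distrib card_pointed_forests forest_count_def card_eq_sum[of "forests K N"])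
  finally show ?thesis by (simp add: card_forest_set)
qed

lemma forest_count_le_marked_count: "N * forest_count K N \<le> K * marked_count K N"
proof -
  have "N \<le> K * length cs" if "cs \<in> forests K N" for cs
  proof -
    have "sum_list (map length cs) \<le> sum_list (map (\<lambda>_. K) cs)"
      using that by (intro sum_list_mono) (auto simp: forests_def)
    then show ?thesis using that by (simp add: forests_def sum_list_triv mult.commute)
  qed
  then have "(\<Sum>cs\<in>forests K N. N) \<le> (\<Sum>cs\<in>forests K N. K * length cs)"
    by (rule sum_mono)
  then show ?thesis by (simp add: forest_count_def marked_count_def sum_distrib_left mult.commute)
qed

lemma marked_count_ge: "K \<ge> 1 \<Longrightarrow> N \<le> marked_count K N"
proof -
  assume "K \<ge> 1"
  then have "replicate N [0] \<in> forests K N"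
    by (simp add: forests_def lukasiewicz_leaf sum_list_replicate)
  then have "length (replicate N [0::nat]) \<le> marked_count K N"
    unfolding marked_count_def by (intro member_le_sum finite_forests) simp_all
  then show ?thesis by simp
qed

lemma card_trees_pow_le_forest_count: "card (trees K) ^ j \<le> forest_count K (j * K)"
proof -
  have "cs \<in> forests K (j * K)" if "set cs \<subseteq> trees K" "length cs = j" for cs
  proof -
    have "sum_list (map length cs) = length cs * K"
      using that(1) by (induction cs) (auto simp: trees_def)
    then show ?thesis using that by (auto simp: forests_def trees_def)
  qed
  then have "{cs. set cs \<subseteq> trees K \<and> length cs = j} \<subseteq> forests K (j * K)" by blast
  then show ?thesis
    unfolding forest_count_def card_lists_length_eq[OF finite_trees, symmetric]
    by (intro card_mono finite_forests)
qed

lemma card_edge_boundary_forest_set: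
  "card (edge_boundary Thompson_F {x0, x1} (forest_set K N))
     \<le> 2 * forest_count K N + 2 * marked_count K (N - 1)"
proof -
  let ?S = "forest_set K N"
  have "card (edge_boundary Thompson_F {x0, x1} ?S)
          \<le> (\<Sum>s\<in>{x0, x1}. 2 * card (?S - (\<lambda>g. s \<bullet> g) ` ?S))"
    using group.card_edge_boundary_le[OF group_Thompson_F finite_forest_set forest_set_subset_Thompson_F]
      xgen_in_Thompson_F[of 0] xgen_in_Thompson_F[of "Suc 0"]
    by (simp add: mult_Thompson_F xgen_0 xgen_1)
  also have "\<dots> \<le> 2 * card (?S - (\<lambda>g. x0 \<bullet> g) ` ?S) + 2 * card (?S - (\<lambda>g. x1 \<bullet> g) ` ?S)"
    by (cases "x0 = x1") simp_all
  also have "\<dots> \<le> 2 * forest_count K N + 2 * marked_count K (N - 1)"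
    using card_forest_set_diff_x0_le card_forest_set_diff_x1_le by (intro add_mono) simp_all
  finally show ?thesis .
qed

section \<open>Growth\<close>

lemma exists_quadratic_lt_exponential:
  fixes q :: real
  assumes "q > 1"
  shows "\<exists>n\<ge>1. 16 * real n ^ 2 < q ^ n"
proof -
  define x where "x = sqrt q"
  have x: "1 < x" "x ^ 2 = q" using assms by (simp_all add: x_def)
  have "(\<lambda>n. real n / x ^ n) \<longlonglongrightarrow> 0" using lim_n_over_pown[of x] x by simp
  then have "eventually (\<lambda>n. real n / x ^ n < 1/4) sequentially"
    by (rule order_tendstoD) simp
  then obtain N where N: "\<And>n. n \<ge> N \<Longrightarrow> real n / x ^ n < 1/4"
    unfolding eventually_sequentially by blast
  define n where "n = max N 1"
  have "real n / x ^ n < 1/4" using N by (simp add: n_def)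
  then have "4 * real n < x ^ n" using x by (simp add: field_simps)
  then have "(4 * real n) ^ 2 < (x ^ n) ^ 2" by (intro power_strict_mono) auto
  also have "(x ^ n) ^ 2 = q ^ n" by (simp add: x(2)[symmetric] power_mult[symmetric] mult.commute)
  finally show ?thesis by (intro exI[of _ n]) (simp add: n_def power_mult_distrib)
qed

text \<open>The trees with \<open>n + 1\<close> nodes are counted by the Catalan number
  \<open>(2n choose n) / (n + 1) \<ge> 4\<^sup>n / (2n(n + 1))\<close>.\<close>

lemma exists_card_trees_ge_pow:
  fixes \<nu> :: real
  assumes \<nu>: "0 < \<nu>" "\<nu> < 4"
  shows "\<exists>K\<ge>1. \<nu> ^ K \<le> real (card (trees K))"
proof -
  define q where "q = 4 / \<nu>"
  have "q > 1" using \<nu> by (simp add: q_def)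
  then obtain n where n: "n \<ge> 1" "16 * real n ^ 2 < q ^ n"
    using exists_quadratic_lt_exponential by blast
  have pos: "0 < 2 * real n * real (Suc n)" using n by simp
  have "real (Suc n) \<le> 2 * real n" using n by simp
  then have "\<nu> * (2 * real n * real (Suc n)) \<le> 4 * (2 * real n * (2 * real n))"
    using \<nu> by (intro mult_mono mult_left_mono) auto
  then have "\<nu> ^ Suc n * (2 * real n * real (Suc n)) \<le> \<nu> ^ n * (4 * (2 * real n * (2 * real n)))"
    using \<nu> by (simp add: mult_left_mono mult.assoc)
  also have "\<dots> = \<nu> ^ n * (16 * real n ^ 2)" by (simp add: power2_eq_square)
  also have "\<dots> \<le> \<nu> ^ n * q ^ n" using n \<nu> by (intro mult_left_mono) auto
  also have "\<dots> = 4 ^ n" using \<nu> by (simp add: q_def power_mult_distrib[symmetric])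
  finally have "\<nu> ^ Suc n \<le> 4 ^ n / (2 * real n * real (Suc n))"
    using pos by (simp add: pos_le_divide_eq)
  also have "\<dots> = 4 ^ n / (2 * real n) / real (Suc n)" by simp
  also have "\<dots> \<le> real ((2 * n) choose n) / real (Suc n)"
    using central_binomial_lower_bound[of n] n by (intro divide_right_mono) auto
  also have "\<dots> \<le> real (card (trees (Suc n)))"
  proof (subst pos_divide_le_eq)
    show "real ((2 * n) choose n) \<le> real (card (trees (Suc n))) * real (Suc n)"
      using central_binomial_le_card_trees[of n] by (metis of_nat_le_iff of_nat_mult mult.commute)
  qed simp
  finally show ?thesis by (intro exI[of _ "Suc n"]) simp
qed

lemma marked_count_frequently_ge_pow:
  fixes \<nu> :: real
  assumes K: "K \<ge> 1" and \<nu>: "0 \<le> \<nu>" "\<nu> ^ K \<le> real (card (trees K))"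
  shows "\<exists>n\<ge>M. \<nu> ^ n \<le> real (marked_count K n)"
proof (intro exI conjI)
  let ?j = "Suc M"
  have "?j * 1 \<le> ?j * K" using K by (rule mult_le_mono2)
  then show "M \<le> ?j * K" by simp
  have "\<nu> ^ (?j * K) = (\<nu> ^ K) ^ ?j" unfolding mult.commute[of ?j K] by (rule power_mult)
  also have "\<dots> \<le> real (card (trees K)) ^ ?j" using \<nu> by (intro power_mono) auto
  also have "\<dots> \<le> real (forest_count K (?j * K))"
    using card_trees_pow_le_forest_count[of K ?j] by (simp only: of_nat_power[symmetric] of_nat_le_iff)
  also have "\<dots> \<le> real (marked_count K (?j * K))"
    using card_forest_set_add_forest_count[of "?j * K" K] K by simp
  finally show "\<nu> ^ (?j * K) \<le> real (marked_count K (?j * K))" .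
qed

lemma exists_pred_le_of_frequently_ge_pow:
  fixes G :: "nat \<Rightarrow> real"
  assumes pos: "\<And>n. n \<ge> 1 \<Longrightarrow> G n > 0" and often: "\<And>M. \<exists>n\<ge>M. b ^ n \<le> G n"
    and c: "c > 0" "c * b > 1"
  shows "\<exists>N\<ge>N0. N \<ge> 1 \<and> G (N - 1) \<le> c * G N"
proof (rule ccontr)
  assume "\<not> ?thesis"
  then have "c * G N < G (N - 1)" if "N \<ge> N0" "N \<ge> 1" for N
    using that by (meson not_le)
  then have shrink: "G N < G (N - 1) / c" if "N \<ge> N0" "N \<ge> 1" for N
    using that c by (simp add: field_simps)
  define M where "M = max N0 1"
  have decay: "G (M + t) \<le> G M / c ^ t" for t
  proof (induction t)
    case (Suc t)
    have "G (M + Suc t) < G (M + t) / c" using shrink[of "M + Suc t"] by (simp add: M_def)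
    also have "\<dots> \<le> G M / c ^ t / c" using Suc.IH c by (intro divide_right_mono) auto
    finally show ?case by (simp add: field_simps)
  qed simp
  obtain n0 where n0: "G M * c ^ M < (c * b) ^ n0" using real_arch_pow[OF c(2)] by blast
  obtain n where n: "n \<ge> max M n0" "b ^ n \<le> G n" using often by blast
  then obtain t where t: "n = M + t" by (metis le_Suc_ex max.bounded_iff)
  have "(c * b) ^ n = c ^ M * (c ^ t * b ^ n)" by (simp add: t power_mult_distrib power_add)
  also have "\<dots> \<le> c ^ M * (c ^ t * (G M / c ^ t))"
    using n(2) decay[of t] c by (intro mult_left_mono) (auto simp: t)
  also have "\<dots> = G M * c ^ M" using c by simp
  also have "\<dots> < (c * b) ^ n0" by (rule n0)
  also have "\<dots> \<le> (c * b) ^ n" using n c by (intro power_increasing) auto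
  finally show False by simp
qed

lemma exists_forest_parameters:
  fixes \<epsilon> :: real
  assumes "\<epsilon> > 0"
  obtains K N where "N \<ge> 1" "marked_count K N > 0"
    "real (forest_count K N) \<le> \<epsilon> * real (marked_count K N)"
    "real (marked_count K (N - 1)) \<le> (1/4 + \<epsilon>) * real (marked_count K N)"
proof -
  define c where "c = 1/4 + \<epsilon>"
  define \<nu> where "\<nu> = (1 / c + 4) / 2"
  have c: "c > 1/4" using assms by (simp add: c_def)
  then have "1 / c < 4" by (simp add: field_simps)
  then have \<nu>: "0 < \<nu>" "\<nu> < 4" "c * \<nu> > 1"
    using c by (auto simp: \<nu>_def field_simps)
  obtain K where K: "K \<ge> 1" "\<nu> ^ K \<le> real (card (trees K))"
    using exists_card_trees_ge_pow[OF \<nu>(1,2)] by blast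
  have pos: "real (marked_count K n) > 0" if "n \<ge> 1" for n
    using marked_count_ge[OF K(1), of n] that by simp
  have often: "\<exists>n\<ge>M. \<nu> ^ n \<le> real (marked_count K n)" for M
    using marked_count_frequently_ge_pow[OF K(1) _ K(2)] \<nu>(1) by simp
  have "c > 0" using c by simp
  obtain N where N: "N \<ge> nat \<lceil>real K / \<epsilon>\<rceil>" "N \<ge> 1"
    and growth: "real (marked_count K (N - 1)) \<le> c * real (marked_count K N)"
    using exists_pred_le_of_frequently_ge_pow[OF pos often \<open>c > 0\<close> \<nu>(3)] by blast
  have "real N * real (forest_count K N) \<le> real K * real (marked_count K N)"
    using forest_count_le_marked_count[of N K] by (simp only: of_nat_mult[symmetric] of_nat_le_iff)
  also have "\<dots> \<le> (\<epsilon> * real N) * real (marked_count K N)"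
    using N(1) assms pos[OF N(2)] by (intro mult_right_mono) (simp_all add: field_simps)
  also have "\<dots> = real N * (\<epsilon> * real (marked_count K N))" by simp
  finally have "real (forest_count K N) \<le> \<epsilon> * real (marked_count K N)"
    using N(2) by (simp add: mult_le_cancel_left_pos)
  with N(2) pos[OF N(2)] growth show ?thesis
    by (intro that) (simp_all add: c_def)
qed

lemma isoperimetric_ratio_arith:
  fixes s a g g' d \<epsilon> :: real
  assumes "s + a = g" "a \<le> \<epsilon> * g" "g' \<le> (1/4 + \<epsilon>) * g" "d \<le> 2 * a + 2 * g'"
    and "g > 0" "0 < \<epsilon>" "\<epsilon> \<le> 1/10"
  shows "s > 0" "d \<le> (1/2 + 10 * \<epsilon>) * s"
proof -
  have s: "(1 - \<epsilon>) * g \<le> s" using assms(1,2) by (simp add: algebra_simps)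
  moreover have "(1 - \<epsilon>) * g > 0" using assms(5-7) by simp
  ultimately show "s > 0" by linarith
  have "d \<le> (1/2 + 4 * \<epsilon>) * g" using assms(2-4) by (simp add: algebra_simps)
  also have "\<dots> \<le> (1/2 + 10 * \<epsilon>) * ((1 - \<epsilon>) * g)"
  proof -
    have "(1/2 + 10 * \<epsilon>) * (1 - \<epsilon>) - (1/2 + 4 * \<epsilon>) = \<epsilon> * (11/2 - 10 * \<epsilon>)"
      by (simp add: field_simps)
    moreover have "\<epsilon> * (11/2 - 10 * \<epsilon>) \<ge> 0" using assms(6,7) by simp
    ultimately have "1/2 + 4 * \<epsilon> \<le> (1/2 + 10 * \<epsilon>) * (1 - \<epsilon>)" by linarith
    from mult_right_mono[OF this, of g] assms(5) show ?thesis by (simp add: mult.assoc)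
  qed
  also have "\<dots> \<le> (1/2 + 10 * \<epsilon>) * s" using s assms(6) by (intro mult_left_mono) auto
  finally show "d \<le> (1/2 + 10 * \<epsilon>) * s" .
qed

theorem proposition5p3p1:
  shows "isoperimetric_constant Thompson_F {x0, x1} \<le> 1 / 2"
proof (rule isoperimetric_constant_le)
  fix \<delta> :: real assume "\<delta> > 0"
  define \<epsilon> where "\<epsilon> = min (\<delta> / 10) (1 / 10)"
  have \<epsilon>: "0 < \<epsilon>" "\<epsilon> \<le> 1/10" "10 * \<epsilon> \<le> \<delta>" using \<open>\<delta> > 0\<close> by (auto simp: \<epsilon>_def)
  obtain K N where N: "N \<ge> 1" "marked_count K N > 0"
    and few_forests: "real (forest_count K N) \<le> \<epsilon> * real (marked_count K N)"
    and growth: "real (marked_count K (N - 1)) \<le> (1/4 + \<epsilon>) * real (marked_count K N)"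
    using exists_forest_parameters[OF \<epsilon>(1)] by blast
  let ?S = "forest_set K N"
  have card_S: "real (card ?S) + real (forest_count K N) = real (marked_count K N)"
    using arg_cong[OF card_forest_set_add_forest_count[OF N(1)], of real] by simp
  have boundary: "real (card (edge_boundary Thompson_F {x0, x1} ?S))
                   \<le> 2 * real (forest_count K N) + 2 * real (marked_count K (N - 1))"
    using of_nat_mono[OF card_edge_boundary_forest_set[of K N], where 'a=real] by simp
  have "real (marked_count K N) > 0" using N(2) by simp
  note ratio = isoperimetric_ratio_arith[OF card_S few_forests growth boundary this \<epsilon>(1,2)]
  have "(1/2 + 10 * \<epsilon>) * real (card ?S) \<le> (1/2 + \<delta>) * real (card ?S)"
    using \<epsilon>(3) by (intro mult_right_mono) auto
  with ratio(2) have "real (card (edge_boundary Thompson_F {x0, x1} ?S)) \<le> (1/2 + \<delta>) * real (card ?S)"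
    by linarith
  moreover have "?S \<noteq> {}" using ratio(1) by auto
  ultimately show "\<exists>S. S \<subseteq> carrier Thompson_F \<and> finite S \<and> S \<noteq> {} \<and>
      real (card (edge_boundary Thompson_F {x0, x1} S)) \<le> (1/2 + \<delta>) * real (card S)"
    using forest_set_subset_Thompson_F[of K N] finite_forest_set[of K N] by (intro exI[of _ ?S]) simp
qed

end
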